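(* Let $0<\alpha\le 5\pi/6$ and let $u,v\in V$ with $\{u,v\}\in E$. Then either $\{u,v\}\in E_\alpha$, or there is a path $u_0,u_1,\dots,u_m$ with $u_0=u$, $u_m=v$, $\{u_i,u_{i+1}\}\in E_\alpha$ and $d(u_i,u_{i+1})<d(u,v)$ for all $i=0,\dots,m-1$.
   Context: Let $V$ be a finite set of pairwise distinct points (nodes) in the Euclidean plane, $d$ the Euclidean distance, and $R>0$. Let $G_R=(V,E)$ be the undirected graph with $E=\{\{u,v\}: u\neq v,\ d(u,v)\le R\}$. Fix a finite increasing sequence of radius levels $0<r_1<r_2<\dots<r_k=R$. For $u\in V$ and $1\le i\le k$ let $S_i(u)=\{v\in V\setminus\{u\}: d(u,v)\le r_i\}$. For $0<\alpha<2\pi$, a closed cone of width $\alpha$ with apex $u$ is a set $\{u+t(\cos\varphi,\sin\varphi): t\ge 0,\ \varphi\in[\theta-\alpha/2,\theta+\alpha/2]\}$ for some $\theta$. A finite set $S\subseteq V\setminus\{u\}$ has an $\alpha$-gap (at $u$) if some closed cone of width $\alpha$ with apex $u$ contains no node of $S$ (in particular $\emptyset$ has an $\alpha$-gap). The algorithm CBTC($\alpha$) assigns to each $u$ the index $i_u$ = the least $i\in\{1,\dots,k\}$ such that $S_i(u)$ has no $\alpha$-gap, or $i_u=k$ if there is no such $i$; set $N_\alpha(u)=S_{i_u}(u)$ and $N_\alpha=\{(u,v): v\in N_\alpha(u)\}$. Let $E_\alpha=\{\{u,v\}: (u,v)\in N_\alpha \text{ or } (v,u)\in N_\alpha\}$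 (the symmetric closure of $N_\alpha$) and $G_\alpha=(V,E_\alpha)$. *)

theory Defs
  imports "HOL-Analysis.Analysis"
begin

text \<open>Points of the Euclidean plane are modelled as complex numbers; dist is the Euclidean distance.
Radius levels are r 1 < ... < r k = R (indices 1..k).\<close>

definition S_lvl :: "complex set \<Rightarrow> (nat \<Rightarrow> real) \<Rightarrow> nat \<Rightarrow> complex \<Rightarrow> complex set" where
  "S_lvl V r i u = {v \<in> V - {u}. dist u v \<le> r i}"

definition closed_cone :: "complex \<Rightarrow> real \<Rightarrow> real \<Rightarrow> complex set" where
  "closed_cone u \<alpha> \<theta> = {u + complex_of_real t * cis \<phi> | t \<phi>.
      t \<ge> 0 \<and> \<theta> - \<alpha>/2 \<le> \<phi> \<and> \<phi> \<le> \<theta> + \<alpha>/2}"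

definition has_gap :: "complex \<Rightarrow> real \<Rightarrow> complex set \<Rightarrow> bool" where
  "has_gap u \<alpha> S \<longleftrightarrow> (\<exists>\<theta>. S \<inter> closed_cone u \<alpha> \<theta> = {})"

definition cbtc_index :: "complex set \<Rightarrow> (nat \<Rightarrow> real) \<Rightarrow> nat \<Rightarrow> real \<Rightarrow> complex \<Rightarrow> nat" where
  "cbtc_index V r k \<alpha> u =
     (if \<exists>i\<in>{1..k}. \<not> has_gap u \<alpha> (S_lvl V r i u)
      then (LEAST i. i \<in> {1..k} \<and> \<not> has_gap u \<alpha> (S_lvl V r i u))
      else k)"

definition N_cbtc :: "complex set \<Rightarrow> (nat \<Rightarrow> real) \<Rightarrow> nat \<Rightarrow> real \<Rightarrow> complex \<Rightarrow> complex set" where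
  "N_cbtc V r k \<alpha> u = S_lvl V r (cbtc_index V r k \<alpha> u) u"

definition E_cbtc :: "complex set \<Rightarrow> (nat \<Rightarrow> real) \<Rightarrow> nat \<Rightarrow> real \<Rightarrow> complex \<Rightarrow> complex \<Rightarrow> bool" where
  "E_cbtc V r k \<alpha> u v \<longleftrightarrow> (u \<in> V \<and> v \<in> N_cbtc V r k \<alpha> u) \<or> (v \<in> V \<and> u \<in> N_cbtc V r k \<alpha> v)"

definition E_R :: "complex set \<Rightarrow> real \<Rightarrow> complex \<Rightarrow> complex \<Rightarrow> bool" where
  "E_R V R u v \<longleftrightarrow> u \<in> V \<and> v \<in> V \<and> u \<noteq> v \<and> dist u v \<le> R"

end

theory Submission
  imports Defs
begin

text \<open>
  Induction on the length \<open>d = dist u v\<close> of the edge. If \<open>{u, v}\<close> is missing from \<open>G\<^sub>\<alpha>\<close>, neither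
  endpoint needed full power, so \<open>N\<^sub>\<alpha>(u)\<close> and \<open>N\<^sub>\<alpha>(v)\<close> have no \<open>\<alpha>\<close>-gap and lie strictly within
  distance \<open>d\<close> of their centres. If a neighbour of one endpoint is closer than \<open>d\<close> to the other,
  induction applies to the remaining short edge. Otherwise, in coordinates with \<open>u = 0\<close> and
  \<open>v = 1\<close>, every neighbour of \<open>u\<close> lies in the lune \<open>|p| < 1 \<le> |p - 1|\<close>, and the absence of gaps yields
  neighbours of \<open>u\<close> on both sides of the line \<open>uv\<close> within angle \<open>\<alpha>\<close> of each other; likewise at \<open>v\<close>.
  Since \<open>2\<alpha> \<le> 5\<pi>/3\<close>, on one side of the line there are neighbours \<open>x\<close> of \<open>u\<close> and \<open>y\<close> of \<open>v\<close> with
  \<open>\<angle>xuv + \<angle>yvu \<le> 5\<pi>/6\<close>, and a trigonometric estimate (convexity of \<open>|p + q - 1|\<^sup>2\<close> in \<open>|p|\<close> and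
  \<open>|q|\<close>, checked at the corners) shows \<open>dist x y < d\<close>.
\<close>

section \<open>A trigonometric estimate\<close>

lemma monic_quadratic_neg_between:
  fixes l h x B C :: real
  assumes "l < h" "l \<le> x" "x \<le> h" "l * l + B * l + C < 0" "h * h + B * h + C < 0"
  shows "x * x + B * x + C < 0"
proof -
  have "(h - l) * (x * x + B * x + C) =
      (h - x) * (l * l + B * l + C) + (x - l) * (h * h + B * h + C) + (h - l) * (x - l) * (x - h)"
    by (simp add: algebra_simps)
  also have "\<dots> < 0"
  proof -
    have "(h - l) * (x - l) * (x - h) \<le> 0"
      using assms by (intro mult_nonneg_nonpos) auto
    moreover have "(h - x) * (l * l + B * l + C) \<le> 0" "(x - l) * (h * h + B * h + C) \<le> 0"
      using assms by (simp_all add: mult_nonneg_nonpos)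
    moreover have "(h - x) * (l * l + B * l + C) < 0 \<or> (x - l) * (h * h + B * h + C) < 0"
      using assms by (cases "x = l") (simp_all add: mult_pos_neg)
    ultimately show ?thesis by linarith
  qed
  finally show ?thesis
    using assms by (simp add: mult_less_0_iff)
qed

lemma pi_third_less_of_cos_less_half:
  fixes x :: real
  assumes "0 < x" "x < pi" "2 * cos x < 1"
  shows "pi / 3 < x"
  using cos_mono_less_eq[of x "pi / 3"] assms cos_60 by auto

lemma cos_less_minus_half:
  fixes x :: real
  assumes "pi < x" "x < 4 * pi / 3"
  shows "cos x < - 1 / 2"
proof -
  have "cos (pi / 3) < cos (x - pi)"
    using cos_mono_less_eq[of "pi / 3" "x - pi"] assms by auto
  then show ?thesis
    using cos_60 by simp
qed

text \<open>With \<open>p = a cis \<phi>\<close> and \<open>q = b cis (-\<psi>)\<close>, \<open>lune_form \<phi> \<psi> a b = |p + q - 1|\<^sup>2 - 1\<close>.\<close>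

definition lune_form :: "real \<Rightarrow> real \<Rightarrow> real \<Rightarrow> real \<Rightarrow> real" where
  "lune_form \<phi> \<psi> a b = a\<^sup>2 + b\<^sup>2 + 2 * a * b * cos (\<phi> + \<psi>) - 2 * a * cos \<phi> - 2 * b * cos \<psi>"

lemma lune_form_swap: "lune_form \<phi> \<psi> a b = lune_form \<psi> \<phi> b a"
  by (simp add: lune_form_def algebra_simps)

context
  fixes \<phi> \<psi> :: real
  assumes gt: "pi / 3 < \<phi>" "pi / 3 < \<psi>" and sum: "\<phi> + \<psi> \<le> 5 * pi / 6"
begin

lemma lune_form_at_cos_cos: "lune_form \<phi> \<psi> (2 * cos \<phi>) (2 * cos \<psi>) < 0"
proof -
  have "0 < cos \<phi>" "0 < cos \<psi>"
    using gt sum by (auto intro!: cos_gt_zero_pi)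
  moreover have "cos (\<phi> + \<psi>) < 0"
    using cos_mono_less_eq[of "\<phi> + \<psi>" "pi / 2"] gt sum by auto
  moreover have "lune_form \<phi> \<psi> (2 * cos \<phi>) (2 * cos \<psi>) = 8 * (cos \<phi> * cos \<psi>) * cos (\<phi> + \<psi>)"
    by (simp add: lune_form_def algebra_simps power2_eq_square)
  ultimately show ?thesis
    by (simp add: mult_pos_neg)
qed

lemma lune_form_at_one_cos: "lune_form \<phi> \<psi> 1 (2 * cos \<psi>) < 0"
proof -
  have half_angles: "((\<phi> + 2 * \<psi>) + \<phi>) / 2 = \<phi> + \<psi>" "((\<phi> + 2 * \<psi>) - \<phi>) / 2 = \<psi>"
    by simp_all
  have "cos (\<phi> + 2 * \<psi>) + cos \<phi> = 2 * cos (\<phi> + \<psi>) * cos \<psi>"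
    using cos_plus_cos[of "\<phi> + 2 * \<psi>" \<phi>] unfolding half_angles .
  then have "lune_form \<phi> \<psi> 1 (2 * cos \<psi>) = 1 + 2 * cos (\<phi> + 2 * \<psi>)"
    by (simp add: lune_form_def algebra_simps power2_eq_square)
  moreover have "cos (\<phi> + 2 * \<psi>) < - 1 / 2"
    using cos_less_minus_half[of "\<phi> + 2 * \<psi>"] gt sum by auto
  ultimately show ?thesis
    by simp
qed

lemma lune_form_at_one_one: "lune_form \<phi> \<psi> 1 1 < 0"
proof -
  define s where "s = (\<phi> + \<psi>) / 2"
  have "\<phi> + \<psi> = 2 * s"
    by (simp add: s_def)
  then have "cos (\<phi> + \<psi>) = 2 * (cos s)\<^sup>2 - 1"
    by (simp only: cos_double_cos)
  moreover have "cos \<phi> + cos \<psi> = 2 * cos s * cos ((\<phi> - \<psi>) / 2)"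
    using cos_plus_cos[of \<phi> \<psi>] by (simp add: s_def)
  ultimately have "lune_form \<phi> \<psi> 1 1 = 4 * cos s * (cos s - cos ((\<phi> - \<psi>) / 2))"
    by (simp add: lune_form_def algebra_simps power2_eq_square)
  moreover have "0 < cos s"
    using gt sum by (auto simp: s_def intro!: cos_gt_zero_pi)
  moreover have "cos s < cos (\<bar>\<phi> - \<psi>\<bar> / 2)"
    using gt sum by (auto simp: s_def intro!: cos_mono_less_eq[THEN iffD2])
  moreover have "cos (\<bar>\<phi> - \<psi>\<bar> / 2) = cos ((\<phi> - \<psi>) / 2)"
    by (metis abs_divide abs_numeral cos_abs_real)
  ultimately show ?thesis
    by (simp add: mult_pos_neg)
qed

end

lemma lune_form_neg:
  assumes "pi / 3 < \<phi>" "pi / 3 < \<psi>" "\<phi> + \<psi> \<le> 5 * pi / 6"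
    and a: "2 * cos \<phi> \<le> a" "a < 1" and b: "2 * cos \<psi> \<le> b" "b < 1"
  shows "lune_form \<phi> \<psi> a b < 0"
proof -
  have in_a: "lune_form \<phi> \<psi> x y = x * x + (2 * y * cos (\<phi> + \<psi>) - 2 * cos \<phi>) * x + (y * y - 2 * y * cos \<psi>)"
    and in_b: "lune_form \<phi> \<psi> x y = y * y + (2 * x * cos (\<phi> + \<psi>) - 2 * cos \<psi>) * y + (x * x - 2 * x * cos \<phi>)"
    for x y
    by (simp_all add: lune_form_def algebra_simps power2_eq_square)
  have "lune_form \<phi> \<psi> (2 * cos \<phi>) 1 = lune_form \<psi> \<phi> 1 (2 * cos \<phi>)"
    by (rule lune_form_swap)
  then have corners: "lune_form \<phi> \<psi> (2 * cos \<phi>) y < 0" "lune_form \<phi> \<psi> 1 y < 0"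
    if "y \<in> {2 * cos \<psi>, 1}" for y
    using that assms(1-3) lune_form_at_cos_cos lune_form_at_one_cos lune_form_at_one_one
      lune_form_at_one_cos[of \<psi> \<phi>]
    by (auto simp: add.commute)
  have edges: "lune_form \<phi> \<psi> a y < 0" if "y \<in> {2 * cos \<psi>, 1}" for y
    using monic_quadratic_neg_between[of "2 * cos \<phi>" 1 a] corners[OF that] a
    unfolding in_a by auto
  show ?thesis
    using monic_quadratic_neg_between[of "2 * cos \<psi>" 1 b] edges[of "2 * cos \<psi>"] edges[of 1] b
    unfolding in_b by auto
qed

definition lune :: "complex set" where
  "lune = {p. p \<noteq> 0 \<and> cmod p < 1 \<and> 1 \<le> cmod (p - 1)}"

lemma of_real_nonneg_notin_lune:
  assumes "0 \<le> t"
  shows "complex_of_real t \<notin> lune"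
proof -
  have "cmod (complex_of_real t - 1) = \<bar>t - 1\<bar>"
    by (metis norm_of_real of_real_1 of_real_diff)
  then show ?thesis
    using assms by (auto simp: lune_def)
qed

lemma lune_cos_Arg_le:
  assumes "p \<in> lune"
  shows "2 * cos (Arg p) \<le> cmod p"
proof -
  have p0: "p \<noteq> 0" and "1 \<le> (cmod (p - 1))\<^sup>2"
    using assms by (auto simp: lune_def)
  then have "1 \<le> (Re p - 1)\<^sup>2 + (Im p)\<^sup>2"
    by (simp add: cmod_power2)
  then have "2 * Re p \<le> (cmod p)\<^sup>2"
    by (simp add: cmod_power2 power2_diff)
  then show ?thesis
    using p0 by (simp add: cos_Arg field_simps power2_eq_square)
qed

lemma cmod_add_minus_one_sq:
  assumes "p \<noteq> 0" "q \<noteq> 0"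
  shows "(cmod (p + q - 1))\<^sup>2 = 1 + lune_form (Arg p) (- Arg q) (cmod p) (cmod q)"
proof -
  have "(cmod (p + q - 1))\<^sup>2 = (Re p + Re q - 1)\<^sup>2 + (Im p + Im q)\<^sup>2"
    by (simp add: cmod_power2)
  also have "\<dots> = 1 + ((Re p)\<^sup>2 + (Im p)\<^sup>2) + ((Re q)\<^sup>2 + (Im q)\<^sup>2)
      + 2 * (Re p * Re q + Im p * Im q) - 2 * Re p - 2 * Re q"
    by (simp add: power2_eq_square algebra_simps)
  also have "\<dots> = 1 + (cmod p)\<^sup>2 + (cmod q)\<^sup>2
      + 2 * (Re p * Re q + Im p * Im q) - 2 * Re p - 2 * Re q"
    by (simp add: cmod_power2)
  also have "Re p * Re q + Im p * Im q = cmod p * cmod q * cos (Arg p - Arg q)"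
    using assms by (simp add: cos_diff cos_Arg sin_Arg field_simps)
  also have "1 + (cmod p)\<^sup>2 + (cmod q)\<^sup>2 + 2 * (cmod p * cmod q * cos (Arg p - Arg q))
      - 2 * Re p - 2 * Re q = 1 + lune_form (Arg p) (- Arg q) (cmod p) (cmod q)"
    using assms by (simp add: lune_form_def cos_Arg)
  finally show ?thesis .
qed

lemma lune_cmod_add_minus_one_less:
  assumes "p \<in> lune" "q \<in> lune" "0 < Im p" "Im q < 0" "Arg p - Arg q \<le> 5 * pi / 6"
  shows "cmod (p + q - 1) < 1"
proof -
  have "2 * cos (Arg p) \<le> cmod p" "2 * cos (- Arg q) \<le> cmod q"
    using lune_cos_Arg_le assms(1,2) by simp_all
  moreover have "cmod p < 1" "cmod q < 1" "p \<noteq> 0" "q \<noteq> 0"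
    using assms(1,2) by (auto simp: lune_def)
  moreover have "0 < Arg p" "Arg p < pi" "0 < - Arg q" "- Arg q < pi"
    using assms(3,4) Arg_lt_pi[of p] Arg_less_0[of q] Arg_bounded[of q] by auto
  ultimately have "pi / 3 < Arg p" "pi / 3 < - Arg q"
    using pi_third_less_of_cos_less_half[of "Arg p"] pi_third_less_of_cos_less_half[of "- Arg q"]
    by auto
  then have "lune_form (Arg p) (- Arg q) (cmod p) (cmod q) < 0"
    using lune_form_neg assms(5) \<open>2 * cos (Arg p) \<le> cmod p\<close> \<open>2 * cos (- Arg q) \<le> cmod q\<close>
      \<open>cmod p < 1\<close> \<open>cmod q < 1\<close> by simp
  then have "(cmod (p + q - 1))\<^sup>2 < 1\<^sup>2"
    using cmod_add_minus_one_sq \<open>p \<noteq> 0\<close> \<open>q \<noteq> 0\<close> by simp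
  then show ?thesis
    by (rule power2_less_imp_less) simp
qed

section \<open>Point sets without angular gaps\<close>

lemma no_gap_straddling_pair:
  assumes "finite P" "\<not> has_gap 0 \<beta> P" "\<beta> \<le> pi"
    and off_axis: "\<And>t. 0 \<le> t \<Longrightarrow> complex_of_real t \<notin> P"
  shows "\<exists>p1\<in>P. \<exists>p2\<in>P. 0 < Im p1 \<and> Im p2 < 0 \<and> Arg p1 - Arg p2 \<le> \<beta>"
proof -
  define A where "A = Arg ` {p\<in>P. 0 < Im p}"
  define B where "B = Arg ` {p\<in>P. Im p < 0}"
  define m1 where "m1 = Min (insert pi A)"
  define m2 where "m2 = Max (insert (- pi) B)"
  have A: "finite A" "\<And>x. x \<in> A \<Longrightarrow> 0 < x \<and> x < pi"
    using assms(1) Arg_lt_pi by (auto simp: A_def)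
  have B: "finite B" "\<And>x. x \<in> B \<Longrightarrow> - pi < x \<and> x < 0"
    using assms(1) Arg_less_0 Arg_bounded by (auto simp: B_def not_le[symmetric])
  have m1: "m1 \<in> insert pi A" "0 < m1" "m1 \<le> pi" "\<And>x. x \<in> A \<Longrightarrow> m1 \<le> x"
    using A Min_in[of "insert pi A"] by (auto simp: m1_def)
  have m2: "m2 \<in> insert (- pi) B" "m2 < 0" "- pi \<le> m2" "\<And>x. x \<in> B \<Longrightarrow> x \<le> m2"
    using B Max_in[of "insert (- pi) B"] by (auto simp: m2_def)
  \<comment> \<open>Otherwise the cone of width \<open>\<beta>\<close> bisecting the angle from \<open>m2\<close> to \<open>m1\<close> would miss \<open>P\<close>.\<close>
  have gap: "m1 - m2 \<le> \<beta>"
  proof (rule ccontr)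
    assume wide: "\<not> m1 - m2 \<le> \<beta>"
    obtain p t \<phi> where p: "p \<in> P" "p = complex_of_real t * cis \<phi>" "0 \<le> t"
      and "(m1 + m2) / 2 - \<beta> / 2 \<le> \<phi>" "\<phi> \<le> (m1 + m2) / 2 + \<beta> / 2"
      using assms(2) unfolding has_gap_def closed_cone_def by fastforce
    then have \<phi>: "m2 < \<phi>" "\<phi> < m1"
      using wide by (simp_all add: field_simps)
    have "t \<noteq> 0"
      using p off_axis by force
    then have "Arg p = \<phi>"
      using p \<phi> m1 m2 by (intro Arg_unique'[of t]) (auto simp: rcis_def)
    consider "0 < Im p" | "Im p < 0" | "Im p = 0" "0 \<le> Re p"
      using Arg_eq_pi[of p] \<open>Arg p = \<phi>\<close> \<phi> m1 by fastforce
    then show False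
    proof cases
      case 1
      then have "\<phi> \<in> A"
        using p(1) \<open>Arg p = \<phi>\<close> by (auto simp: A_def)
      then show False
        using m1(4) \<phi> by force
    next
      case 2
      then have "\<phi> \<in> B"
        using p(1) \<open>Arg p = \<phi>\<close> by (auto simp: B_def)
      then show False
        using m2(4) \<phi> by force
    next
      case 3
      then have "p = complex_of_real (Re p)"
        by (simp add: complex_eq_iff)
      then show False
        using off_axis[OF \<open>0 \<le> Re p\<close>] p(1) by simp
    qed
  qed
  have "m1 \<noteq> pi" "m2 \<noteq> - pi"
    using gap m1 m2 assms(3) by auto
  then have "m1 \<in> A" "m2 \<in> B"
    using m1(1) m2(1) by auto
  then show ?thesis
    using gap by (auto simp: A_def B_def)
qed

definition frame :: "complex \<Rightarrow> complex \<Rightarrow> complex \<Rightarrow> complex" where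
  "frame u v z = (z - u) / (v - u)"

lemma no_gap_frame:
  assumes "u \<noteq> v" "\<not> has_gap u \<alpha> X"
  shows "\<not> has_gap 0 \<alpha> (frame u v ` X)"
proof -
  define \<beta> where "\<beta> = Arg (v - u)"
  have "frame u v ` X \<inter> closed_cone 0 \<alpha> \<theta> \<noteq> {}" for \<theta>
  proof -
    obtain z t \<phi> where z: "z \<in> X" "z = u + complex_of_real t * cis \<phi>" "0 \<le> t"
      "\<theta> + \<beta> - \<alpha> / 2 \<le> \<phi>" "\<phi> \<le> \<theta> + \<beta> + \<alpha> / 2"
      using assms(2) unfolding has_gap_def closed_cone_def by fastforce
    have "v - u = complex_of_real (cmod (v - u)) * cis \<beta>"
      using rcis_cmod_Arg[of "v - u"] by (simp add: \<beta>_def rcis_def)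
    then have "frame u v z = complex_of_real (t / cmod (v - u)) * cis (\<phi> - \<beta>)"
      using z(2) assms(1) by (simp add: frame_def cis_divide[symmetric] field_simps)
    moreover have "0 \<le> t / cmod (v - u)"
      using z(3) by simp
    ultimately have "frame u v z \<in> closed_cone 0 \<alpha> \<theta>"
      unfolding closed_cone_def
      by (intro CollectI exI[of _ "t / cmod (v - u)"] exI[of _ "\<phi> - \<beta>"]) (use z(4,5) in auto)
    then show ?thesis
      using z(1) by blast
  qed
  then show ?thesis
    unfolding has_gap_def by blast
qed

lemma frame_in_lune:
  assumes "z \<noteq> u" "dist u z < dist u v" "dist u v \<le> dist z v"
  shows "frame u v z \<in> lune"
proof -
  have "u \<noteq> v"
    using assms(2) by auto
  then have "frame u v z - 1 = (z - v) / (v - u)"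
    by (simp add: frame_def field_simps)
  then show ?thesis
    using assms \<open>u \<noteq> v\<close>
    by (simp add: lune_def frame_def norm_divide dist_norm norm_minus_commute divide_simps)
qed

lemma dist_eq_frames:
  assumes "u \<noteq> v"
  shows "dist x y = dist u v * cmod (frame u v x + frame v u y - 1)"
proof -
  have "(v - u) * frame u v x = x - u" "(v - u) * frame v u y = v - y"
    using assms by (simp_all add: frame_def divide_simps algebra_simps)
  then have "(v - u) * (frame u v x + frame v u y - 1) = x - y"
    by (simp add: distrib_left right_diff_distrib)
  then show ?thesis
    by (metis dist_norm norm_minus_commute norm_mult)
qed

lemma close_pair_in_lunes:
  assumes "u \<noteq> v" "finite X" "finite Y" "\<alpha> \<le> 5 * pi / 6"
    and "\<not> has_gap u \<alpha> X" "\<not> has_gap v \<alpha> Y"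
    and X: "frame u v ` X \<subseteq> lune" and Y: "frame v u ` Y \<subseteq> lune"
  shows "\<exists>x\<in>X. \<exists>y\<in>Y. dist x y < dist u v"
proof -
  have "\<alpha> \<le> pi"
    using assms(4) pi_gt_zero by linarith
  have "\<exists>p1\<in>frame u v ` X. \<exists>p2\<in>frame u v ` X. 0 < Im p1 \<and> Im p2 < 0 \<and> Arg p1 - Arg p2 \<le> \<alpha>"
    using assms(1,2,5) X of_real_nonneg_notin_lune \<open>\<alpha> \<le> pi\<close>
    by (intro no_gap_straddling_pair no_gap_frame) auto
  then obtain x1 x2 where x: "x1 \<in> X" "x2 \<in> X" "0 < Im (frame u v x1)" "Im (frame u v x2) < 0"
    "Arg (frame u v x1) - Arg (frame u v x2) \<le> \<alpha>"
    by blast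
  have "\<exists>q1\<in>frame v u ` Y. \<exists>q2\<in>frame v u ` Y. 0 < Im q1 \<and> Im q2 < 0 \<and> Arg q1 - Arg q2 \<le> \<alpha>"
    using assms(1,3,6) Y of_real_nonneg_notin_lune \<open>\<alpha> \<le> pi\<close>
    by (intro no_gap_straddling_pair no_gap_frame) auto
  then obtain y1 y2 where y: "y1 \<in> Y" "y2 \<in> Y" "0 < Im (frame v u y1)" "Im (frame v u y2) < 0"
    "Arg (frame v u y1) - Arg (frame v u y2) \<le> \<alpha>"
    by blast
  have close: "dist x y < dist u v" if "cmod (frame u v x + frame v u y - 1) < 1" for x y
    using that dist_eq_frames[OF assms(1), of x y] assms(1) by simp
  \<comment> \<open>\<open>frame v u\<close> swaps the sides of the line \<open>uv\<close>, so \<open>x1, y2\<close> lie on one side and \<open>x2, y1\<close> on the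
    other; the two spans add up to at most \<open>2\<alpha> \<le> 5\<pi>/3\<close>.\<close>
  consider "Arg (frame u v x1) - Arg (frame v u y2) \<le> 5 * pi / 6"
    | "Arg (frame v u y1) - Arg (frame u v x2) \<le> 5 * pi / 6"
    using x(5) y(5) assms(4) by linarith
  then show ?thesis
  proof cases
    case 1
    then have "cmod (frame u v x1 + frame v u y2 - 1) < 1"
      using x y X Y by (intro lune_cmod_add_minus_one_less) auto
    then show ?thesis
      using close x(1) y(2) by blast
  next
    case 2
    then have "cmod (frame v u y1 + frame u v x2 - 1) < 1"
      using x y X Y by (intro lune_cmod_add_minus_one_less) auto
    then have "dist x2 y1 < dist u v"
      using close[of x2 y1] by (simp add: add.commute)
    then show ?thesis
      using x(2) y(1) by blast
  qed
qed

lemma close_pair_near_edge: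
  assumes "finite X" "finite Y" "\<alpha> \<le> 5 * pi / 6"
    and "\<not> has_gap u \<alpha> X" "\<not> has_gap v \<alpha> Y"
    and X: "\<And>x. x \<in> X \<Longrightarrow> x \<noteq> u \<and> dist u x < dist u v"
    and Y: "\<And>y. y \<in> Y \<Longrightarrow> y \<noteq> v \<and> dist v y < dist u v"
  shows "\<exists>x\<in>insert u X. \<exists>y\<in>insert v Y. dist x y < dist u v"
proof -
  have "X \<noteq> {}"
    using assms(4) by (auto simp: has_gap_def)
  then have "u \<noteq> v"
    using X by fastforce
  show ?thesis
  proof (cases "(\<exists>x\<in>X. dist x v < dist u v) \<or> (\<exists>y\<in>Y. dist u y < dist u v)")
    case True
    then show ?thesis
      by blast
  next
    case False
    then have "frame u v ` X \<subseteq> lune" "frame v u ` Y \<subseteq> lune"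
      using X Y by (auto intro!: frame_in_lune simp: dist_commute)
    then show ?thesis
      using close_pair_in_lunes[OF \<open>u \<noteq> v\<close> assms(1-5)] by blast
  qed
qed

section \<open>Short paths in \<open>G\<^sub>\<alpha>\<close>\<close>

lemma N_cbtc_subset: "N_cbtc V r k \<alpha> u \<subseteq> V - {u}"
  by (auto simp: N_cbtc_def S_lvl_def)

lemma N_cbtc_cases:
  obtains "N_cbtc V r k \<alpha> u = S_lvl V r k u"
  | i where "\<not> has_gap u \<alpha> (S_lvl V r i u)" "N_cbtc V r k \<alpha> u = S_lvl V r i u"
proof (cases "\<exists>i\<in>{1..k}. \<not> has_gap u \<alpha> (S_lvl V r i u)")
  case True
  define i where "i = (LEAST i. i \<in> {1..k} \<and> \<not> has_gap u \<alpha> (S_lvl V r i u))"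
  have "\<not> has_gap u \<alpha> (S_lvl V r i u)"
    using True LeastI_ex[of "\<lambda>i. i \<in> {1..k} \<and> \<not> has_gap u \<alpha> (S_lvl V r i u)"]
    unfolding i_def by blast
  moreover have "N_cbtc V r k \<alpha> u = S_lvl V r i u"
    using True by (simp add: N_cbtc_def cbtc_index_def i_def)
  ultimately show ?thesis
    by (rule that(2))
next
  case False
  then have "N_cbtc V r k \<alpha> u = S_lvl V r k u"
    by (simp add: N_cbtc_def cbtc_index_def)
  then show ?thesis
    by (rule that(1))
qed

lemma N_cbtc_excluding_neighbour:
  assumes "v \<in> V" "v \<noteq> u" "dist u v \<le> r k" "v \<notin> N_cbtc V r k \<alpha> u"
  shows "\<not> has_gap u \<alpha> (N_cbtc V r k \<alpha> u)"
    and "\<And>z. z \<in> N_cbtc V r k \<alpha> u \<Longrightarrow> dist u z < dist u v"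
proof -
  obtain i where i: "\<not> has_gap u \<alpha> (S_lvl V r i u)" "N_cbtc V r k \<alpha> u = S_lvl V r i u"
  proof (cases rule: N_cbtc_cases[of V r k \<alpha> u])
    case 1
    then show ?thesis
      using assms by (simp add: S_lvl_def)
  next
    case (2 i)
    then show ?thesis
      by (rule that)
  qed
  then have "r i < dist u v"
    using assms by (auto simp: S_lvl_def)
  with i show "\<not> has_gap u \<alpha> (N_cbtc V r k \<alpha> u)"
    and "\<And>z. z \<in> N_cbtc V r k \<alpha> u \<Longrightarrow> dist u z < dist u v"
    by (auto simp: S_lvl_def)
qed

definition short_hop :: "('a \<Rightarrow> 'a \<Rightarrow> bool) \<Rightarrow> real \<Rightarrow> 'a::metric_space \<Rightarrow> 'a \<Rightarrow> bool" where
  "short_hop E D x y \<longleftrightarrow> E x y \<and> dist x y < D"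

lemma short_hop_mono: "D \<le> D' \<Longrightarrow> short_hop E D \<le> short_hop E D'"
  by (auto simp: short_hop_def)

lemma cbtc_path_step:
  assumes "finite V" "r k = R" "\<alpha> \<le> 5 * pi / 6" "E_R V R u v" "\<not> E_cbtc V r k \<alpha> u v"
    and close: "\<And>a b. a \<in> V \<Longrightarrow> b \<in> V \<Longrightarrow> dist a b < dist u v \<Longrightarrow>
      (short_hop (E_cbtc V r k \<alpha>) (dist u v))\<^sup>*\<^sup>* a b"
  shows "(short_hop (E_cbtc V r k \<alpha>) (dist u v))\<^sup>*\<^sup>* u v"
proof -
  let ?N = "N_cbtc V r k \<alpha>" and ?hop = "short_hop (E_cbtc V r k \<alpha>) (dist u v)"
  have uv: "u \<in> V" "v \<in> V" "u \<noteq> v" "dist u v \<le> r k"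
    using assms(2,4) by (auto simp: E_R_def)
  moreover have "v \<notin> ?N u" "u \<notin> ?N v"
    using assms(5) uv by (auto simp: E_cbtc_def)
  ultimately have Nu: "\<not> has_gap u \<alpha> (?N u)" "\<And>x. x \<in> ?N u \<Longrightarrow> dist u x < dist u v"
    and Nv: "\<not> has_gap v \<alpha> (?N v)" "\<And>y. y \<in> ?N v \<Longrightarrow> dist v y < dist u v"
    using N_cbtc_excluding_neighbour[of v V u r k \<alpha>] N_cbtc_excluding_neighbour[of u V v r k \<alpha>]
    by (simp_all add: dist_commute)
  have sub: "?N u \<subseteq> V - {u}" "?N v \<subseteq> V - {v}"
    by (rule N_cbtc_subset)+
  then have fin: "finite (?N u)" "finite (?N v)"
    using assms(1) by (auto intro: finite_subset)
  obtain x y where xy: "x \<in> insert u (?N u)" "y \<in> insert v (?N v)" "dist x y < dist u v"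
    using close_pair_near_edge[OF fin assms(3) Nu(1) Nv(1)] Nu(2) Nv(2) sub by blast
  have "?hop\<^sup>*\<^sup>* u x"
  proof (cases "x = u")
    case False
    then have "?hop u x"
      using xy(1) Nu(2) uv(1) by (simp add: short_hop_def E_cbtc_def)
    then show ?thesis ..
  qed simp
  also have "?hop\<^sup>*\<^sup>* x y"
    using xy sub uv by (intro close) auto
  also have "?hop\<^sup>*\<^sup>* y v"
  proof (cases "y = v")
    case False
    then have "?hop y v"
      using xy(2) Nv(2)[of y] uv(2) by (simp add: short_hop_def E_cbtc_def dist_commute[of y v])
    then show ?thesis ..
  qed simp
  finally show ?thesis .
qed

lemma cbtc_short_path:
  assumes "finite V" "r k = R" "\<alpha> \<le> 5 * pi / 6"
  shows "E_R V R u v \<Longrightarrow> E_cbtc V r k \<alpha> u v \<or> (short_hop (E_cbtc V r k \<alpha>) (dist u v))\<^sup>*\<^sup>* u v"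
proof (induction "card {(a, b) \<in> V \<times> V. dist a b < dist u v}" arbitrary: u v rule: less_induct)
  case less
  let ?hop = "short_hop (E_cbtc V r k \<alpha>)"
  have close: "(?hop (dist u v))\<^sup>*\<^sup>* a b" if ab: "a \<in> V" "b \<in> V" "dist a b < dist u v" for a b
  proof (cases "a = b")
    case False
    then have "E_R V R a b"
      using ab less.prems by (auto simp: E_R_def)
    moreover have "card {(x, y) \<in> V \<times> V. dist x y < dist a b} < card {(x, y) \<in> V \<times> V. dist x y < dist u v}"
      using ab assms(1) by (intro psubset_card_mono) (auto intro: finite_subset[of _ "V \<times> V"])
    ultimately have "E_cbtc V r k \<alpha> a b \<or> (?hop (dist a b))\<^sup>*\<^sup>* a b"
      using less.hyps by blast
    then show ?thesis
    proof
      assume "E_cbtc V r k \<alpha> a b"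
      then have "?hop (dist u v) a b"
        using ab(3) by (simp add: short_hop_def)
      then show ?thesis ..
    next
      assume "(?hop (dist a b))\<^sup>*\<^sup>* a b"
      then show ?thesis
        by (rule predicate2D[OF rtranclp_mono[OF short_hop_mono[OF less_imp_le[OF ab(3)]]]])
    qed
  qed simp
  show ?case
  proof (cases "E_cbtc V r k \<alpha> u v")
    case False
    then show ?thesis
      using cbtc_path_step[of V r k R \<alpha> u v, OF assms less.prems False close] by simp
  qed simp
qed

theorem corollary1:
  fixes V :: "complex set" and R \<alpha> :: real and r :: "nat \<Rightarrow> real" and k :: nat and u v :: complex
  assumes "finite V" and "R > 0"
    and "k \<ge> 1" and "r 1 > 0" and "\<And>i j. 1 \<le> i \<Longrightarrow> i < j \<Longrightarrow> j \<le> k \<Longrightarrow> r i < r j"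
    and "r k = R"
    and "0 < \<alpha>" and "\<alpha> \<le> 5 * pi / 6"
    and "E_R V R u v"
  shows "E_cbtc V r k \<alpha> u v \<or>
    (\<exists>m p. p 0 = u \<and> p m = v \<and>
       (\<forall>i<m. E_cbtc V r k \<alpha> (p i) (p (Suc i)) \<and> dist (p i) (p (Suc i)) < dist u v))"
  using cbtc_short_path[of V r k R \<alpha> u v, OF assms(1,6,8,9)]
  unfolding rtranclp_power relpowp_fun_conv short_hop_def by simp

end
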